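(* Let $\alpha_1,\dots,\alpha_K,\gamma\in\mathbb R^d$, $\omega_1,\dots,\omega_K>0$, and $(\xi_n)$ a sequence in $\mathbb R^d$. Let $f_n(\theta)=-\sum_{k=1}^K\omega_k\exp(\alpha_k^{T}\theta)+\xi_n^{T}\theta-\tfrac12\theta^{T}\theta$ with unique maximizer $\hat\theta_n$, and $I(\theta)=I_d+\sum_{k=1}^K\omega_k\exp(\alpha_k^{T}\theta)\alpha_k\alpha_k^{T}$. If $\gamma^{T}\hat\theta_n\to+\infty$, then there is a constant $M>0$ independent of $n$ such that for all sufficiently large $n$ $M^{-1}\frac{(\gamma^{T}\hat\theta_n)\exp(f_n(\hat\theta_n))}{\sqrt{\det I(\hat\theta_n)}}\le\int_{\mathbb R^d}(2\pi)^{-d/2}(\gamma^{T}\theta)\exp(f_n(\theta))d\theta\le M\frac{(\gamma^{T}\hat\theta_n)\exp(f_n(\hat\theta_n))}{\sqrt{\det I(\hat\theta_n)}}.$ The same holds with $\gamma$ replaced by $-\gamma$ when $\gamma^{T}\hat\theta_n\to-\infty$. *)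

theory Defs
  imports "HOL-Analysis.Analysis"
begin

text \<open>The objective f_n, with alpha_1..alpha_K indexed by k < K (0-based),
  xi the n-th term xi_n.\<close>
definition fobj :: "nat \<Rightarrow> (nat \<Rightarrow> real^'d) \<Rightarrow> (nat \<Rightarrow> real) \<Rightarrow> real^'d \<Rightarrow> real^'d \<Rightarrow> real" where
  "fobj K \<alpha> \<omega> \<xi> \<theta> = - (\<Sum>k<K. \<omega> k * exp (\<alpha> k \<bullet> \<theta>)) + \<xi> \<bullet> \<theta> - (\<theta> \<bullet> \<theta>) / 2"

definition Imat :: "nat \<Rightarrow> (nat \<Rightarrow> real^'d) \<Rightarrow> (nat \<Rightarrow> real) \<Rightarrow> real^'d \<Rightarrow> real^'d^'d" where
  "Imat K \<alpha> \<omega> \<theta> = mat 1 + (\<Sum>k<K. (\<omega> k * exp (\<alpha> k \<bullet> \<theta>)) *\<^sub>R (\<chi> i j. \<alpha> k $ i * \<alpha> k $ j))"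

end

theory Submission
  imports Defs "HOL-Probability.Distributions"
begin

text \<open>
  Write \<open>f\<close> for \<open>fobj K \<alpha> \<omega> (\<xi> n)\<close> and \<open>t\<close> for its maximizer \<open>\<theta>hat n\<close>. The gradient
  vanishes at \<open>t\<close>, so \<open>f (t + u) = f t - g u\<close> with
  \<open>g u = (\<Sum>k<K. w k * (exp (\<alpha> k \<bullet> u) - 1 - \<alpha> k \<bullet> u)) + u \<bullet> u / 2\<close> and
  \<open>w k = \<omega> k * exp (\<alpha> k \<bullet> t)\<close>; the Hessian of \<open>g\<close> at \<open>0\<close> is \<open>Imat K \<alpha> \<omega> t\<close>. For \<open>P\<close>
  with \<open>transpose P ** Imat K \<alpha> \<omega> t ** P = mat 1\<close>, the substitution \<open>\<theta> = t + P *v v\<close> has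
  Jacobian \<open>\<bar>det P\<bar> = 1 / sqrt (det (Imat K \<alpha> \<omega> t))\<close> and leaves the integral of
  \<open>(\<gamma> \<bullet> t + \<gamma> \<bullet> (P *v v)) * exp (- g (P *v v))\<close>. If \<open>norm (\<alpha> k) \<le> L\<close>, then \<open>g (P *v v)\<close> is at
  most \<open>exp L / 2\<close> on the unit ball and at least \<open>exp (- L) / 2 * (norm v - 1)\<close> everywhere,
  independently of \<open>n\<close>. So that integral lies between \<open>a * (\<gamma> \<bullet> t) - b\<close> and
  \<open>c * (\<gamma> \<bullet> t) + b\<close> with constants \<open>a > 0\<close>, \<open>b\<close>, \<open>c\<close>, and \<open>\<gamma> \<bullet> t \<longrightarrow> \<infinity>\<close> absorbs \<open>b\<close>.
\<close>

section \<open>Linear change of variables over arbitrary finite index types\<close>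

text \<open>
  \<open>Change_Of_Vars\<close> proves the change of variables formula for linear maps only on
  \<open>real^'n\<close> with a well-ordered index type \<open>'n\<close>; transporting it along a well-ordered copy
  of an arbitrary finite index type removes that restriction.
\<close>

typedef 'a ordered_copy = "UNIV :: 'a set" ..

instantiation ordered_copy :: (finite) wellorder
begin

definition less_eq_ordered_copy :: "'a ordered_copy \<Rightarrow> 'a ordered_copy \<Rightarrow> bool"
  where "x \<le> y \<longleftrightarrow> to_nat (Rep_ordered_copy x) \<le> to_nat (Rep_ordered_copy y)"

definition less_ordered_copy :: "'a ordered_copy \<Rightarrow> 'a ordered_copy \<Rightarrow> bool"
  where "x < y \<longleftrightarrow> to_nat (Rep_ordered_copy x) < to_nat (Rep_ordered_copy y)"

instance
proof
  fix P :: "'a ordered_copy \<Rightarrow> bool" and a :: "'a ordered_copy"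
  assume step: "\<And>x. (\<And>y. y < x \<Longrightarrow> P y) \<Longrightarrow> P x"
  have "\<And>x. to_nat (Rep_ordered_copy x) = n \<Longrightarrow> P x" for n
    by (induction n rule: less_induct) (metis less_ordered_copy_def step)
  then show "P a" by blast
qed (auto simp: less_eq_ordered_copy_def less_ordered_copy_def Rep_ordered_copy_inject)

end

instance ordered_copy :: (finite) finite
  by standard (simp add: type_definition.univ[OF type_definition_ordered_copy])

lemma det_reindex:
  fixes A :: "'a::comm_ring_1^'n::finite^'n"
  assumes r: "bij (r :: 'm::finite \<Rightarrow> 'n)"
  shows "det (\<chi> i j. A $ r i $ r j) = det A"
proof -
  let ?conj = "\<lambda>p. r \<circ> p \<circ> inv r"
  have conj_eq: "?conj p = map_permutation UNIV r p" for p
    using r by (simp add: map_permutation_def restrict_id_def bij_is_surj comp_def)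
  have "bij_betw ?conj {p. p permutes UNIV} {p. p permutes UNIV}"
    using bij_betw_permutations[OF r] by (simp add: comp_def bij_is_surj)
  moreover have "of_int (sign (?conj p)) * (\<Prod>i\<in>UNIV. A $ i $ ?conj p i)
      = of_int (sign p) * (\<Prod>i\<in>UNIV. A $ r i $ r (p i))" if "p permutes UNIV" for p
  proof -
    have "sign (?conj p) = sign p"
      unfolding conj_eq using that r by (simp add: sign_map_permutation bij_is_inj)
    moreover have "(\<Prod>i\<in>UNIV. A $ i $ ?conj p i) = (\<Prod>i\<in>UNIV. A $ r i $ r (p i))"
      using prod.reindex_bij_betw[OF r, of "\<lambda>i. A $ i $ ?conj p i"] r by (simp add: bij_is_inj)
    ultimately show ?thesis by simp
  qed
  ultimately show ?thesis
    unfolding det_def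
    by (subst sum.reindex_bij_betw[symmetric, of ?conj]) (auto intro!: sum.cong)
qed

lemma borel_measurable_linear:
  fixes f :: "'a::euclidean_space \<Rightarrow> 'b::euclidean_space"
  shows "linear f \<Longrightarrow> f \<in> borel_measurable borel"
  by (intro borel_measurable_continuous_onI linear_continuous_on) (simp add: linear_linear)

lemma prod_Basis_cart: "(\<Prod>b\<in>Basis. v \<bullet> b) = (\<Prod>i\<in>UNIV. (v::real^'n) $ i)"
  by (simp add: Basis_vec_def cart_eq_inner_axis axis_eq_axis prod.UNION_disjoint)

lemma lborel_eq_distr_reindex:
  assumes r: "bij (r :: 'm::finite \<Rightarrow> 'n::finite)"
  shows "(lborel :: (real^'m) measure) = distr lborel borel (\<lambda>x::real^'n. \<chi> i. x $ r i)"
proof (rule lborel_eqI)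
  fix l u :: "real^'m"
  assume box_le: "\<And>b. b \<in> Basis \<Longrightarrow> l \<bullet> b \<le> u \<bullet> b"
  have le: "l $ i \<le> u $ i" for i
    using box_le[of "axis i 1"] by (simp add: inner_axis)
  let ?back = "\<lambda>y::real^'m. \<chi> j. y $ inv r j"
  have "(\<lambda>x::real^'n. \<chi> i. x $ r i) \<in> borel_measurable borel"
    by (intro borel_measurable_linear linearI) (simp_all add: vec_eq_iff)
  moreover have "(\<lambda>x::real^'n. \<chi> i. x $ r i) -` box l u = box (?back l) (?back u)"
    using r by (auto simp: mem_box_cart bij_def surj_f_inv_f) (metis bij_inv_eq_iff r)+
  ultimately have "emeasure (distr lborel borel (\<lambda>x::real^'n. \<chi> i. x $ r i)) (box l u)
      = emeasure lborel (box (?back l) (?back u))"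
    by (simp add: emeasure_distr)
  also have "\<dots> = (\<Prod>j\<in>UNIV. u $ inv r j - l $ inv r j)"
  proof -
    have "\<forall>b\<in>Basis. ?back l \<bullet> b \<le> ?back u \<bullet> b"
      using le by (auto simp: Basis_vec_def inner_axis)
    then show ?thesis
      by (simp add: emeasure_lborel_box_eq prod_Basis_cart)
  qed
  also have "(\<Prod>j\<in>UNIV. u $ inv r j - l $ inv r j) = (\<Prod>i\<in>UNIV. u $ i - l $ i)"
    using prod.reindex_bij_betw[OF bij_imp_bij_inv[OF r], of "\<lambda>i. u $ i - l $ i"] by simp
  finally show "emeasure (distr lborel borel (\<lambda>x::real^'n. \<chi> i. x $ r i)) (box l u)
      = (\<Prod>b\<in>Basis. (u - l) \<bullet> b)"
    by (simp add: prod_Basis_cart)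
qed simp

lemma lborel_eq_density_linear_wellorder:
  fixes T :: "real^'n::{finite,wellorder} \<Rightarrow> real^'n::_"
  assumes T: "linear T" and det: "det (matrix T) \<noteq> 0"
  shows "lborel = density (distr lborel borel T) (\<lambda>_. ennreal \<bar>det (matrix T)\<bar>)"
proof (rule lborel_eqI)
  obtain T' where T': "linear T'" "\<And>x. T' (T x) = x" "\<And>x. T (T' x) = x"
    using linear_injective_isomorphism[of T] T det det_nz_iff_inj[OF T] by metis
  have "matrix T ** matrix T' = mat 1"
    using matrix_compose[OF T'(1) T] T'(3) by (simp add: o_def matrix_id_mat_1[unfolded id_def])
  then have det_inv: "\<bar>det (matrix T)\<bar> * \<bar>det (matrix T')\<bar> = 1"
    by (metis abs_mult abs_one det_I det_mul)
  have T_meas: "T \<in> borel_measurable borel"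
    using T by (rule borel_measurable_linear)
  fix l u :: "real^'n::_"
  assume le: "\<And>b. b \<in> Basis \<Longrightarrow> l \<bullet> b \<le> u \<bullet> b"
  have pre: "T -` box l u = T' ` box l u"
    using T' by (auto simp: image_iff) metis
  have borel: "T -` box l u \<in> sets borel"
    by (rule measurable_sets_borel[OF T_meas]) simp
  have fin: "T' ` box l u \<in> lmeasurable"
    by (rule measurable_linear_image[OF T'(1)]) simp
  have "emeasure lborel (T -` box l u) = emeasure lebesgue (T' ` box l u)"
    using borel pre by simp
  also have "\<dots> = ennreal (\<bar>det (matrix T')\<bar> * measure lebesgue (box l u))"
    using fin by (simp add: emeasure_eq_measure2 measure_linear_image[OF T'(1)])
  also have "measure lebesgue (box l u) = (\<Prod>b\<in>Basis. (u - l) \<bullet> b)"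
    using le by (simp add: measure_lborel_box_eq inner_diff_left)
  finally have "emeasure lborel (T -` box l u)
      = ennreal (\<bar>det (matrix T')\<bar> * (\<Prod>b\<in>Basis. (u - l) \<bullet> b))" .
  moreover have "0 \<le> (\<Prod>b\<in>Basis. (u - l) \<bullet> b)"
    using le by (simp add: prod_nonneg inner_diff_left)
  ultimately show "emeasure (density (distr lborel borel T) (\<lambda>_. ennreal \<bar>det (matrix T)\<bar>)) (box l u)
      = (\<Prod>b\<in>Basis. (u - l) \<bullet> b)"
    using T_meas det_inv
    by (simp add: emeasure_density_const emeasure_distr ennreal_mult'[symmetric] mult.assoc[symmetric])
qed simp

lemma lborel_eq_density_linear:
  fixes T :: "real^'n::finite \<Rightarrow> real^'n"
  assumes T: "linear T" and det: "det (matrix T) \<noteq> 0"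
  shows "lborel = density (distr lborel borel T) (\<lambda>_. ennreal \<bar>det (matrix T)\<bar>)"
proof -
  let ?c = "\<lambda>_. ennreal \<bar>det (matrix T)\<bar>"
  let ?to = "\<lambda>x::real^'n. \<chi> i::'n ordered_copy. x $ Rep_ordered_copy i"
  let ?from = "\<lambda>y::real^'n ordered_copy. \<chi> j. y $ Abs_ordered_copy j"
  define T' where "T' = ?to \<circ> T \<circ> ?from"
  have bij_Rep: "bij Rep_ordered_copy" and bij_Abs: "bij Abs_ordered_copy"
    by (metis Abs_ordered_copy_inverse Rep_ordered_copy_inverse UNIV_I bij_betw_byWitness
        subset_UNIV image_subset_iff)+
  have lin_to: "linear ?to" and lin_from: "linear ?from"
    by (auto intro!: linearI simp: vec_eq_iff)
  have "matrix T' = (\<chi> i j. matrix T $ Rep_ordered_copy i $ Rep_ordered_copy j)"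
  proof -
    have Abs_eq: "Abs_ordered_copy j = i \<longleftrightarrow> j = Rep_ordered_copy i" for i j
      by (metis Abs_ordered_copy_inverse Rep_ordered_copy_inverse UNIV_I)
    show ?thesis
      unfolding T'_def matrix_def by (simp add: axis_def Abs_eq)
  qed
  then have det': "det (matrix T') = det (matrix T)"
    by (simp add: det_reindex[OF bij_Rep])
  have lin': "linear T'"
    unfolding T'_def by (intro linear_compose lin_to lin_from T)
  have from_T': "?from \<circ> T' = T \<circ> ?from"
    by (simp add: T'_def fun_eq_iff vec_eq_iff Abs_ordered_copy_inverse)
  have "(lborel :: (real^'n) measure) = distr lborel borel ?from"
    by (rule lborel_eq_distr_reindex[OF bij_Abs])
  also have "\<dots> = distr (density (distr lborel borel T') ?c) borel ?from"
    using lborel_eq_density_linear_wellorder[OF lin', unfolded det', OF det] by simp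
  also have "\<dots> = distr (density lborel ?c) borel (?from \<circ> T')"
    using borel_measurable_linear[OF lin'] borel_measurable_linear[OF lin_from]
    by (simp add: density_distr distr_distr)
  also have "\<dots> = distr (distr (density lborel ?c) borel ?from) borel T"
    using borel_measurable_linear[OF T] borel_measurable_linear[OF lin_from]
    by (simp add: from_T' distr_distr)
  also have "distr (density lborel ?c) borel ?from = density (distr lborel borel ?from) ?c"
    using density_distr[of ?c borel ?from lborel] borel_measurable_linear[OF lin_from] by simp
  also have "\<dots> = density lborel ?c"
    by (simp flip: lborel_eq_distr_reindex[OF bij_Abs])
  also have "distr (density lborel ?c) borel T = density (distr lborel borel T) ?c"
    using density_distr[of ?c borel T lborel] borel_measurable_linear[OF T] by simp
  finally show ?thesis .
qed

lemma lborel_integral_linear_affine: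
  fixes T :: "real^'n::finite \<Rightarrow> real^'n" and f :: "real^'n \<Rightarrow> real"
  assumes T: "linear T" and det: "det (matrix T) \<noteq> 0" and f: "f \<in> borel_measurable borel"
  shows "integral\<^sup>L lborel f = \<bar>det (matrix T)\<bar> * integral\<^sup>L lborel (\<lambda>x. f (t + T x))"
proof -
  have T_meas: "T \<in> borel_measurable borel"
    using T by (rule borel_measurable_linear)
  have shifted: "(\<lambda>u. f (t + u)) \<in> borel_measurable borel"
    using f by measurable
  have "integral\<^sup>L lborel f = integral\<^sup>L (distr lborel borel ((+) t)) f"
    by (simp add: lborel_distr_plus)
  also have "\<dots> = integral\<^sup>L lborel (\<lambda>u. f (t + u))"
    using f by (simp add: integral_distr)
  also have "\<dots> = integral\<^sup>L (density (distr lborel borel T) (\<lambda>_. ennreal \<bar>det (matrix T)\<bar>))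
      (\<lambda>u. f (t + u))"
    by (subst lborel_eq_density_linear[OF T det]) (rule refl)
  also have "\<dots> = \<bar>det (matrix T)\<bar> * integral\<^sup>L lborel (\<lambda>x. f (t + T x))"
    using shifted T_meas by (simp add: integral_density integral_distr)
  finally show ?thesis .
qed

section \<open>Reducing \<open>Imat\<close> to the identity by a congruence\<close>

definition outer :: "real^'n::finite \<Rightarrow> real^'n^'n" where
  "outer a = (\<chi> i j. a $ i * a $ j)"

lemma outer_mult_vec: "outer a *v x = (a \<bullet> x) *\<^sub>R a"
  by (simp add: outer_def vec_eq_iff matrix_vector_mult_def inner_vec_def sum_distrib_left mult_ac)

lemma rank_one_congruence:
  fixes b :: "real^'n::finite"
  assumes w: "w \<ge> 0"
  shows "\<exists>c. (mat 1 + c *\<^sub>R outer b) ** (mat 1 + w *\<^sub>R outer b) ** (mat 1 + c *\<^sub>R outer b) = mat 1"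
proof -
  define s where "s = b \<bullet> b"
  have R: "(mat 1 + c *\<^sub>R outer b) *v x = x + (c * (b \<bullet> x)) *\<^sub>R b" for c x
    by (simp add: matrix_vector_mult_add_rdistrib scaleR_matrix_vector_assoc[symmetric] outer_mult_vec)
  have triple: "(mat 1 + c *\<^sub>R outer b) ** (mat 1 + w *\<^sub>R outer b) ** (mat 1 + c *\<^sub>R outer b)
      = mat 1 + (c + w * (1 + c * s) + c * (1 + c * s) * (1 + w * s)) *\<^sub>R outer b" for c
    unfolding matrix_eq
    by (simp add: R matrix_vector_mult_add_rdistrib scaleR_matrix_vector_assoc[symmetric] outer_mult_vec
        flip: matrix_vector_mul_assoc)
      (simp add: inner_add_right s_def vec_eq_iff algebra_simps)
  show ?thesis
  proof (cases "s = 0")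
    case True
    then have "outer b = 0"
      by (simp add: s_def outer_def vec_eq_iff)
    then show ?thesis by simp
  next
    case False
    have "1 + w * s > 0"
      using w by (simp add: s_def add_pos_nonneg)
    define c where "c = (1 / sqrt (1 + w * s) - 1) / s"
    have "(1 + c * s)\<^sup>2 * (1 + w * s) = 1"
      using False \<open>1 + w * s > 0\<close> by (simp add: c_def power_divide)
    then have "s * (c + w * (1 + c * s) + c * (1 + c * s) * (1 + w * s)) = 0"
      by (simp add: algebra_simps power2_eq_square)
    then show ?thesis
      using triple[of c] False by auto
  qed
qed

lemma congruence_to_identity:
  fixes a :: "nat \<Rightarrow> real^'n::finite"
  assumes "\<And>k. k < m \<Longrightarrow> w k \<ge> 0"
  shows "\<exists>P::real^'n^'n. transpose P ** (mat 1 + (\<Sum>k<m. w k *\<^sub>R outer (a k))) ** P = mat 1"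
  using assms
proof (induction m)
  case 0
  show ?case by (rule exI[of _ "mat 1"]) simp
next
  case (Suc m)
  define A where "A = mat 1 + (\<Sum>k<m. w k *\<^sub>R outer (a k))"
  obtain P :: "real^'n^'n" where P: "transpose P ** A ** P = mat 1"
    using Suc unfolding A_def by (metis less_SucI)
  define b where "b = transpose P *v a m"
  obtain c where
    c: "(mat 1 + c *\<^sub>R outer b) ** (mat 1 + w m *\<^sub>R outer b) ** (mat 1 + c *\<^sub>R outer b) = mat 1"
    using rank_one_congruence[of "w m" b] Suc.prems by auto
  define R where "R = mat 1 + c *\<^sub>R outer b"
  have sum_Suc: "mat 1 + (\<Sum>k<Suc m. w k *\<^sub>R outer (a k)) = A + w m *\<^sub>R outer (a m)"
    by (simp add: A_def add.assoc)
  have step: "transpose P ** (A + w m *\<^sub>R outer (a m)) ** P = mat 1 + w m *\<^sub>R outer b"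
  proof -
    have "transpose P *v (A *v (P *v x)) = x" for x
      by (metis P matrix_vector_mul_assoc matrix_vector_mul_lid)
    then show ?thesis
      unfolding matrix_eq
      by (simp add: matrix_vector_mult_add_rdistrib matrix_vector_right_distrib outer_mult_vec b_def
          scaleR_matrix_vector_assoc[symmetric] matrix_vector_mult_scaleR dot_lmul_matrix
          flip: matrix_vector_mul_assoc)
  qed
  have R_sym: "transpose R = R"
    by (simp add: R_def outer_def transpose_def vec_eq_iff mat_def mult.commute)
  have "transpose (P ** R) ** (mat 1 + (\<Sum>k<Suc m. w k *\<^sub>R outer (a k))) ** (P ** R)
      = transpose R ** (transpose P ** (A + w m *\<^sub>R outer (a m)) ** P) ** R"
    by (simp only: sum_Suc matrix_transpose_mul matrix_mul_assoc)
  also have "\<dots> = R ** (mat 1 + w m *\<^sub>R outer b) ** R"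
    by (simp only: step R_sym)
  also have "\<dots> = mat 1"
    using c by (simp only: R_def)
  finally show ?case
    by blast
qed

lemma Imat_eq_outer: "Imat K \<alpha> \<omega> th = mat 1 + (\<Sum>k<K. (\<omega> k * exp (\<alpha> k \<bullet> th)) *\<^sub>R outer (\<alpha> k))"
  by (simp add: Imat_def outer_def)

lemma det_congruent_to_identity:
  fixes A P :: "real^'n::finite^'n"
  assumes "transpose P ** A ** P = mat 1"
  shows "det A > 0" and "\<bar>det P\<bar> = 1 / sqrt (det A)"
proof -
  have "det P ^ 2 * det A = 1"
    using assms by (metis det_I det_mul det_transpose mult.commute power2_eq_square mult.assoc)
  then have "det P \<noteq> 0" "det A = 1 / (det P)\<^sup>2"
    by (auto simp: eq_divide_eq mult.commute)
  then show "det A > 0" "\<bar>det P\<bar> = 1 / sqrt (det A)"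
    by (simp_all add: real_sqrt_divide)
qed

lemma det_Imat_pos:
  fixes \<alpha> :: "nat \<Rightarrow> real^'n::finite"
  assumes "\<And>k. k < K \<Longrightarrow> \<omega> k > 0"
  shows "det (Imat K \<alpha> \<omega> th) > 0"
proof -
  have "\<exists>P::real^'n^'n. transpose P ** Imat K \<alpha> \<omega> th ** P = mat 1"
    unfolding Imat_eq_outer using assms by (intro congruence_to_identity) (simp add: less_imp_le)
  then obtain P :: "real^'n^'n" where "transpose P ** Imat K \<alpha> \<omega> th ** P = mat 1"
    by blast
  then show ?thesis
    by (rule det_congruent_to_identity)
qed

section \<open>The objective near its maximizer\<close>

definition exp_rem :: "real \<Rightarrow> real" where
  "exp_rem t = exp t - 1 - t"

lemma exp_rem_bounds:
  assumes "\<bar>t\<bar> \<le> L"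
  shows "exp (- L) * t\<^sup>2 / 2 \<le> exp_rem t" and "exp_rem t \<le> exp L * t\<^sup>2 / 2"
proof -
  obtain s where s: "\<bar>s\<bar> \<le> \<bar>t\<bar>" "exp t = (\<Sum>m<2. t ^ m / fact m) + exp s / fact 2 * t ^ 2"
    using Maclaurin_exp_le[of t 2] by blast
  have "exp_rem t = exp s * t\<^sup>2 / 2"
    using s(2) by (simp add: exp_rem_def eval_nat_numeral)
  moreover have "exp (- L) \<le> exp s" "exp s \<le> exp L"
    using s(1) assms by auto
  ultimately show "exp (- L) * t\<^sup>2 / 2 \<le> exp_rem t" "exp_rem t \<le> exp L * t\<^sup>2 / 2"
    by (auto intro: mult_right_mono divide_right_mono)
qed

lemma exp_rem_scale:
  assumes "s \<ge> 1"
  shows "exp_rem (t / s) \<le> exp_rem t / s"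
proof -
  have "exp ((1 - 1 / s) *\<^sub>R 0 + (1 / s) *\<^sub>R t) \<le> (1 - 1 / s) * exp 0 + (1 / s) * exp t"
    using assms by (intro convex_onD[OF exp_convex]) auto
  then have "exp (t / s) \<le> exp t / s + 1 - 1 / s"
    by (simp add: algebra_simps)
  then show ?thesis
    by (simp add: exp_rem_def diff_divide_distrib)
qed

text \<open>
  With \<open>w k = \<omega> k * exp (\<alpha> k \<bullet> t)\<close> at a maximizer \<open>t\<close> of \<open>f\<close>, \<open>gap K \<alpha> w u\<close> is
  \<open>f t - f (t + u)\<close> (\<open>fobj_shift_at_max\<close>) and \<open>hform K \<alpha> w\<close> is the quadratic form of
  \<open>Imat K \<alpha> \<omega> t\<close> (\<open>hform_eq_inner\<close>).
\<close>

definition gap :: "nat \<Rightarrow> (nat \<Rightarrow> real^'d) \<Rightarrow> (nat \<Rightarrow> real) \<Rightarrow> real^'d \<Rightarrow> real" where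
  "gap K \<alpha> w u = (\<Sum>k<K. w k * exp_rem (\<alpha> k \<bullet> u)) + (u \<bullet> u) / 2"

definition hform :: "nat \<Rightarrow> (nat \<Rightarrow> real^'d) \<Rightarrow> (nat \<Rightarrow> real) \<Rightarrow> real^'d \<Rightarrow> real" where
  "hform K \<alpha> w u = u \<bullet> u + (\<Sum>k<K. w k * (\<alpha> k \<bullet> u)\<^sup>2)"

lemma hform_eq_inner:
  fixes u :: "real^'n::finite"
  shows "hform K \<alpha> w u = u \<bullet> ((mat 1 + (\<Sum>k<K. w k *\<^sub>R outer (\<alpha> k))) *v u)"
proof -
  have "(\<Sum>k<n. M k) *v u = (\<Sum>k<n. M k *v u)" for n and M :: "nat \<Rightarrow> real^'n^'n"
    by (induction n) (simp_all add: matrix_vector_mult_add_rdistrib)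
  then show ?thesis
    by (simp add: hform_def matrix_vector_mult_add_rdistrib scaleR_matrix_vector_assoc[symmetric]
        outer_mult_vec inner_add_right inner_sum_right power2_eq_square inner_commute mult_ac)
qed

lemma hform_scale: "hform K \<alpha> w (c *\<^sub>R u) = c\<^sup>2 * hform K \<alpha> w u"
  by (simp add: hform_def power2_eq_square sum_distrib_left algebra_simps)

lemma norm_le_sqrt_hform:
  assumes "\<And>k. k < K \<Longrightarrow> w k \<ge> 0"
  shows "norm u \<le> sqrt (hform K \<alpha> w u)"
  using assms by (auto simp: hform_def norm_eq_sqrt_inner intro!: sum_nonneg)

lemma gap_scale:
  assumes w: "\<And>k. k < K \<Longrightarrow> w k \<ge> 0" and s: "s \<ge> 1"
  shows "gap K \<alpha> w ((1 / s) *\<^sub>R u) \<le> gap K \<alpha> w u / s"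
proof -
  have "(\<Sum>k<K. w k * exp_rem (\<alpha> k \<bullet> ((1 / s) *\<^sub>R u))) \<le> (\<Sum>k<K. w k * (exp_rem (\<alpha> k \<bullet> u) / s))"
    using w exp_rem_scale[OF s] by (intro sum_mono mult_left_mono) auto
  moreover have "((1 / s) *\<^sub>R u) \<bullet> ((1 / s) *\<^sub>R u) \<le> (u \<bullet> u) / s"
    using s mult_right_mono[OF s inner_ge_zero[of u]] by (simp add: field_simps)
  ultimately show ?thesis
    by (simp add: gap_def sum_divide_distrib add_divide_distrib)
qed

context
  fixes K :: nat and \<alpha> :: "nat \<Rightarrow> real^'d" and w :: "nat \<Rightarrow> real" and L :: real
  assumes w_nonneg: "\<And>k. k < K \<Longrightarrow> w k \<ge> 0"
    and \<alpha>_bound: "\<And>k. k < K \<Longrightarrow> norm (\<alpha> k) \<le> L" and L_nonneg: "L \<ge> 0"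
begin

lemma gap_hform_bounds:
  assumes u: "norm u \<le> 1"
  shows "exp (- L) / 2 * hform K \<alpha> w u \<le> gap K \<alpha> w u" and "gap K \<alpha> w u \<le> exp L / 2 * hform K \<alpha> w u"
proof -
  have t: "\<bar>\<alpha> k \<bullet> u\<bar> \<le> L" if "k < K" for k
  proof -
    have "norm (\<alpha> k) * norm u \<le> L * 1"
      using \<alpha>_bound[OF that] u L_nonneg by (intro mult_mono) auto
    then show ?thesis
      using Cauchy_Schwarz_ineq2[of "\<alpha> k" u] by linarith
  qed
  have "(\<Sum>k<K. w k * (exp (- L) * (\<alpha> k \<bullet> u)\<^sup>2 / 2)) \<le> (\<Sum>k<K. w k * exp_rem (\<alpha> k \<bullet> u))"
    using w_nonneg exp_rem_bounds(1)[OF t] by (intro sum_mono mult_left_mono) auto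
  moreover have "exp (- L) * (u \<bullet> u) \<le> u \<bullet> u"
    using L_nonneg by (simp add: mult_left_le_one_le)
  ultimately show "exp (- L) / 2 * hform K \<alpha> w u \<le> gap K \<alpha> w u"
    by (simp add: hform_def gap_def distrib_left sum_distrib_left mult_ac)
  have "(\<Sum>k<K. w k * exp_rem (\<alpha> k \<bullet> u)) \<le> (\<Sum>k<K. w k * (exp L * (\<alpha> k \<bullet> u)\<^sup>2 / 2))"
    using w_nonneg exp_rem_bounds(2)[OF t] by (intro sum_mono mult_left_mono) auto
  moreover have "u \<bullet> u \<le> exp L * (u \<bullet> u)"
    using mult_right_mono[of 1 "exp L" "u \<bullet> u"] L_nonneg by simp
  ultimately show "gap K \<alpha> w u \<le> exp L / 2 * hform K \<alpha> w u"
    by (simp add: hform_def gap_def distrib_left sum_distrib_left mult_ac)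
qed

lemma gap_ge_sqrt_hform: "exp (- L) / 2 * (sqrt (hform K \<alpha> w u) - 1) \<le> gap K \<alpha> w u"
proof -
  define r where "r = sqrt (hform K \<alpha> w u)"
  have hform_nonneg: "hform K \<alpha> w u \<ge> 0"
    using w_nonneg unfolding hform_def by (intro add_nonneg_nonneg sum_nonneg) auto
  then have r: "norm u \<le> r" "r\<^sup>2 = hform K \<alpha> w u"
    using norm_le_sqrt_hform[of K w u \<alpha>] w_nonneg by (auto simp: r_def)
  show ?thesis
  proof (cases "norm u \<le> 1")
    case True
    have "0 \<le> (r - 1)\<^sup>2" "0 \<le> r"
      by (simp_all add: r_def hform_nonneg)
    then have "r - 1 \<le> r\<^sup>2"
      by (simp add: power2_diff)
    then have "exp (- L) / 2 * (r - 1) \<le> exp (- L) / 2 * r\<^sup>2"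
      by (intro mult_left_mono) auto
    also have "\<dots> \<le> gap K \<alpha> w u"
      using gap_hform_bounds(1)[OF True] r(2) by simp
    finally show ?thesis
      by (simp add: r_def)
  next
    case False
    txt \<open>Rescaling \<open>u\<close> onto the unit sphere divides \<open>hform\<close> by \<open>s\<^sup>2\<close> but, by convexity of
      \<open>exp_rem\<close>, divides \<open>gap\<close> by at least \<open>s\<close>.\<close>
    define s where "s = norm u"
    have s: "s > 1" "s \<le> r"
      using False r(1) by (auto simp: s_def)
    have "exp (- L) / 2 * (r\<^sup>2 / s\<^sup>2) \<le> gap K \<alpha> w ((1 / s) *\<^sub>R u)"
      using gap_hform_bounds(1)[of "(1 / s) *\<^sub>R u"] s
      by (simp add: s_def hform_scale r(2) power_divide)
    also have "\<dots> \<le> gap K \<alpha> w u / s"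
      using s by (intro gap_scale w_nonneg) auto
    finally have "exp (- L) / 2 * (r\<^sup>2 / s) \<le> gap K \<alpha> w u"
      using s by (simp add: field_simps power2_eq_square)
    moreover have "r - 1 \<le> r\<^sup>2 / s"
    proof -
      have "r * s \<le> r * r"
        using s by (intro mult_left_mono) auto
      then have "(r - 1) * s \<le> r\<^sup>2"
        using s unfolding power2_eq_square left_diff_distrib by linarith
      then show ?thesis
        using s by (simp add: pos_le_divide_eq)
    qed
    then have "exp (- L) / 2 * (r - 1) \<le> exp (- L) / 2 * (r\<^sup>2 / s)"
      by (intro mult_left_mono) auto
    ultimately show ?thesis
      by (simp add: r_def)
  qed
qed


lemma gap_normalized_bounds:
  fixes P :: "real^'d^'d"
  assumes P: "transpose P ** (mat 1 + (\<Sum>k<K. w k *\<^sub>R outer (\<alpha> k))) ** P = mat 1"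
  shows "norm (P *v v) \<le> norm v"
    and "exp (- L) / 2 * (norm v - 1) \<le> gap K \<alpha> w (P *v v)"
    and "norm v \<le> 1 \<Longrightarrow> gap K \<alpha> w (P *v v) \<le> exp L / 2"
proof -
  define A where "A = mat 1 + (\<Sum>k<K. w k *\<^sub>R outer (\<alpha> k))"
  have "hform K \<alpha> w (P *v v) = (transpose P *v (A *v (P *v v))) \<bullet> v"
    by (simp add: hform_eq_inner A_def[symmetric]) (metis dot_lmul_matrix inner_commute)
  also have "transpose P *v (A *v (P *v v)) = v"
    using P by (simp add: matrix_vector_mul_assoc matrix_mul_assoc A_def)
  finally have hform_P: "hform K \<alpha> w (P *v v) = (norm v)\<^sup>2"
    by (simp add: power2_norm_eq_inner)
  show norm_P: "norm (P *v v) \<le> norm v"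
    using norm_le_sqrt_hform[of K w "P *v v" \<alpha>] w_nonneg by (simp add: hform_P)
  show "exp (- L) / 2 * (norm v - 1) \<le> gap K \<alpha> w (P *v v)"
    using gap_ge_sqrt_hform[of "P *v v"] by (simp add: hform_P)
  assume "norm v \<le> 1"
  then have "gap K \<alpha> w (P *v v) \<le> exp L / 2 * (norm v)\<^sup>2"
    using gap_hform_bounds(2)[of "P *v v"] norm_P by (simp add: hform_P)
  also have "\<dots> \<le> exp L / 2"
    using \<open>norm v \<le> 1\<close> by (simp add: power_le_one mult_left_le)
  finally show "gap K \<alpha> w (P *v v) \<le> exp L / 2" .
qed

end

lemma fobj_stationary:
  assumes max: "\<And>\<theta>. fobj K \<alpha> \<omega> \<xi> \<theta> \<le> fobj K \<alpha> \<omega> \<xi> th"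
  shows "\<xi> = th + (\<Sum>k<K. (\<omega> k * exp (\<alpha> k \<bullet> th)) *\<^sub>R \<alpha> k)"
proof -
  define G where "G = \<xi> - th - (\<Sum>k<K. (\<omega> k * exp (\<alpha> k \<bullet> th)) *\<^sub>R \<alpha> k)"
  define F where "F t = fobj K \<alpha> \<omega> \<xi> (th + t *\<^sub>R G)" for t
  have "F = (\<lambda>t. - (\<Sum>k<K. \<omega> k * exp (\<alpha> k \<bullet> th + t * (\<alpha> k \<bullet> G))) + (\<xi> \<bullet> th + t * (\<xi> \<bullet> G))
              - (th \<bullet> th + 2 * t * (th \<bullet> G) + t\<^sup>2 * (G \<bullet> G)) / 2)"
    by (simp add: F_def fobj_def fun_eq_iff inner_add_right inner_add_left algebra_simps
        power2_eq_square inner_commute)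
  then have "DERIV F 0 :> - (\<Sum>k<K. \<omega> k * (exp (\<alpha> k \<bullet> th) * (\<alpha> k \<bullet> G))) + \<xi> \<bullet> G - th \<bullet> G"
    by (auto intro!: derivative_eq_intros simp: mult_ac)
  also have "- (\<Sum>k<K. \<omega> k * (exp (\<alpha> k \<bullet> th) * (\<alpha> k \<bullet> G))) + \<xi> \<bullet> G - th \<bullet> G = G \<bullet> G"
    by (simp add: G_def inner_diff_left inner_sum_left mult_ac)
  finally have D: "DERIV F 0 :> G \<bullet> G" .
  have "G \<bullet> G = 0"
    using DERIV_local_max[OF D, of 1] max by (simp add: F_def)
  then have "G = 0"
    by simp
  then show ?thesis
    by (simp add: G_def algebra_simps)
qed

lemma fobj_shift_at_max:
  assumes max: "\<And>\<theta>. fobj K \<alpha> \<omega> \<xi> \<theta> \<le> fobj K \<alpha> \<omega> \<xi> th"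
  shows "fobj K \<alpha> \<omega> \<xi> (th + u) = fobj K \<alpha> \<omega> \<xi> th - gap K \<alpha> (\<lambda>k. \<omega> k * exp (\<alpha> k \<bullet> th)) u"
proof -
  have "\<xi> \<bullet> u = th \<bullet> u + (\<Sum>k<K. \<omega> k * exp (\<alpha> k \<bullet> th) * (\<alpha> k \<bullet> u))"
    by (subst fobj_stationary[OF max]) (simp add: inner_add_left inner_sum_left)
  moreover have "exp (\<alpha> k \<bullet> (th + u)) = exp (\<alpha> k \<bullet> th) * exp (\<alpha> k \<bullet> u)" for k
    by (simp add: inner_add_right exp_add)
  moreover have "(th + u) \<bullet> (th + u) = th \<bullet> th + 2 * (th \<bullet> u) + u \<bullet> u"
    by (simp add: inner_add_left inner_add_right inner_commute)
  ultimately show ?thesis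
    by (simp add: fobj_def gap_def exp_rem_def inner_add_right algebra_simps sum_subtractf
        sum.distrib sum_distrib_left)
qed

section \<open>Two-sided bounds on the integral\<close>

lemma nn_integral_exp_neg_abs_finite:
  fixes b :: real
  assumes b: "b > 0"
  shows "(\<integral>\<^sup>+t. ennreal (exp (- b * \<bar>t\<bar>)) \<partial>lborel) < \<infinity>"
proof -
  have one: "(\<integral>\<^sup>+t. ennreal (exponential_density b t) \<partial>lborel) = 1"
    using prob_space.emeasure_space_1[OF prob_space_exponential_density[OF b]]
    by (simp add: emeasure_density)
  then have one': "(\<integral>\<^sup>+t. ennreal (exponential_density b (- t)) \<partial>lborel) = 1"
    using nn_integral_real_affine[of "\<lambda>t. ennreal (exponential_density b t)" "-1" 0] by simp
  have "exp (- b * \<bar>t\<bar>) \<le> (1 / b) * (exponential_density b t + exponential_density b (- t))" for t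
    using b by (auto simp: exponential_density_def field_simps abs_if)
  then have "(\<integral>\<^sup>+t. ennreal (exp (- b * \<bar>t\<bar>)) \<partial>lborel)
      \<le> (\<integral>\<^sup>+t. ennreal (1 / b) * (ennreal (exponential_density b t) + ennreal (exponential_density b (- t))) \<partial>lborel)"
    using b by (intro nn_integral_mono)
      (simp add: ennreal_mult[symmetric] exponential_density_nonneg ennreal_plus[symmetric] del: ennreal_plus)
  also have "\<dots> = ennreal (1 / b) * 2"
    by (simp add: nn_integral_cmult nn_integral_add one one')
  also have "\<dots> < \<infinity>"
    by (simp add: ennreal_mult_less_top)
  finally show ?thesis .
qed

lemma integrable_exp_neg_norm:
  fixes a :: real
  assumes a: "a > 0"
  shows "integrable lborel (\<lambda>v::'a::euclidean_space. exp (- a * norm v))"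
proof (subst integrable_iff_bounded, intro conjI)
  show "(\<lambda>v::'a. exp (- a * norm v)) \<in> borel_measurable lborel"
    by measurable
  define b where "b = a / real DIM('a)"
  have b: "b > 0"
    using a by (simp add: b_def)
  have le: "ennreal (norm (exp (- a * norm v))) \<le> (\<Prod>j\<in>Basis. ennreal (exp (- b * \<bar>v \<bullet> j\<bar>)))"
    for v :: 'a
  proof -
    have "(\<Sum>j\<in>Basis. \<bar>v \<bullet> j\<bar>) \<le> (\<Sum>j\<in>(Basis::'a set). norm v)"
      by (intro sum_mono Basis_le_norm)
    then have "b * (\<Sum>j\<in>Basis. \<bar>v \<bullet> j\<bar>) \<le> a * norm v"
      using a by (simp add: b_def field_simps)
    then have "exp (- a * norm v) \<le> (\<Prod>j\<in>Basis. exp (- b * \<bar>v \<bullet> j\<bar>))"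
      by (simp add: sum_distrib_left sum_negf exp_sum[symmetric])
    then show ?thesis
      by (simp add: prod_ennreal ennreal_leI)
  qed
  have "(\<integral>\<^sup>+v. ennreal (norm (exp (- a * norm v))) \<partial>(lborel::'a measure))
      \<le> (\<integral>\<^sup>+v. (\<Prod>j\<in>Basis. ennreal (exp (- b * \<bar>v \<bullet> j\<bar>))) \<partial>(lborel::'a measure))"
    by (rule nn_integral_mono) (rule le)
  also have "\<dots> = (\<Prod>j\<in>(Basis::'a set). (\<integral>\<^sup>+t. ennreal (exp (- b * \<bar>t\<bar>)) \<partial>lborel))"
    by (rule nn_integral_lborel_prod[where f="\<lambda>_ t. ennreal (exp (- b * \<bar>t\<bar>))"]) auto
  also have "\<dots> < \<infinity>"
    using nn_integral_exp_neg_abs_finite[OF b] by (simp add: power_less_top_ennreal)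
  finally show "(\<integral>\<^sup>+v. ennreal (norm (exp (- a * norm v))) \<partial>(lborel::'a measure)) < \<infinity>" .
qed

lemma integrable_norm_exp_neg_norm:
  fixes a :: real
  assumes a: "a > 0"
  shows "integrable lborel (\<lambda>v::'a::euclidean_space. norm v * exp (- a * norm v))"
proof (rule Bochner_Integration.integrable_bound)
  show "integrable lborel (\<lambda>v::'a. 2 / a * exp (- (a / 2) * norm v))"
    using a by (intro integrable_mult_right integrable_exp_neg_norm) simp
  have "norm v * exp (- a * norm v) \<le> 2 / a * exp (- (a / 2) * norm v)" for v :: 'a
  proof -
    have "a / 2 * norm v \<le> exp (a / 2 * norm v)"
      using exp_ge_add_one_self[of "a / 2 * norm v"] by linarith
    then have "norm v \<le> 2 / a * exp (a / 2 * norm v)"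
      using a by (simp add: field_simps)
    then have "norm v * exp (- a * norm v) \<le> 2 / a * exp (a / 2 * norm v) * exp (- a * norm v)"
      by (rule mult_right_mono) simp
    also have "\<dots> = 2 / a * exp (- (a / 2) * norm v)"
      by (simp add: mult.assoc exp_add[symmetric])
    finally show ?thesis .
  qed
  then show "AE v in lborel. norm (norm v * exp (- a * norm v)) \<le> norm (2 / a * exp (- (a / 2) * norm (v::'a)))"
    using a by simp
qed measurable

lemma integral_bounds_from_growth:
  fixes G lin :: "'a::euclidean_space \<Rightarrow> real"
  assumes G_meas: "G \<in> borel_measurable borel" and lin_meas: "lin \<in> borel_measurable borel"
    and c: "c > 0" and x: "x \<ge> 0"
    and lin_bound: "\<And>v. \<bar>lin v\<bar> \<le> g * norm v"
    and G_lower: "\<And>v. c * (norm v - 1) \<le> G v"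
    and G_ball: "\<And>v. norm v \<le> 1 \<Longrightarrow> G v \<le> C"
  defines "E \<equiv> \<lambda>v::'a. exp (- c * (norm v - 1))"
  shows "x * exp (- C) * measure lborel (cball (0::'a) 1) - g * (\<integral>v. norm v * E v \<partial>lborel)
           \<le> (\<integral>v. (x + lin v) * exp (- G v) \<partial>lborel)"
    and "(\<integral>v. (x + lin v) * exp (- G v) \<partial>lborel)
           \<le> x * (\<integral>v. E v \<partial>lborel) + g * (\<integral>v. norm v * E v \<partial>lborel)"
proof -
  define H where "H v = (x + lin v) * exp (- G v)" for v
  define lower where "lower v = x * exp (- C) * indicator (cball 0 1) v - g * (norm v * E v)" for v
  define upper where "upper v = x * E v + g * (norm v * E v)" for v
  have E_eq: "E = (\<lambda>v. exp c * exp (- c * norm v))"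
    by (simp add: E_def fun_eq_iff algebra_simps flip: exp_add)
  have E_int: "integrable lborel E"
    unfolding E_eq by (intro integrable_mult_right integrable_exp_neg_norm c)
  have NE_int: "integrable lborel (\<lambda>v. norm v * E v)"
    unfolding E_eq mult.left_commute[of "norm _"]
    by (intro integrable_mult_right integrable_norm_exp_neg_norm c)
  have ball_int: "integrable lborel (indicator (cball (0::'a) 1) :: 'a \<Rightarrow> real)"
    by (intro integrable_real_indicator) (auto simp: emeasure_lborel_cball_finite[unfolded infinity_ennreal_def])
  have exp_G: "exp (- G v) \<le> E v" for v
    using G_lower[of v] by (simp add: E_def)
  have lin_exp: "\<bar>lin v * exp (- G v)\<bar> \<le> g * (norm v * E v)" for v
    using mult_mono[OF lin_bound exp_G order_trans[OF abs_ge_zero lin_bound]]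
    by (simp add: abs_mult mult.assoc)
  have H_upper: "H v \<le> upper v" for v
    using lin_exp[of v] mult_left_mono[OF exp_G x, of v]
    by (simp add: H_def upper_def distrib_right abs_le_iff)
  have H_lower: "lower v \<le> H v" for v
  proof -
    have "x * exp (- C) * indicator (cball 0 1) v \<le> x * exp (- G v)"
      using G_ball[of v] x by (auto simp: indicator_def intro: mult_left_mono)
    then show ?thesis
      using lin_exp[of v] by (simp add: H_def lower_def distrib_right abs_le_iff)
  qed
  have upper_int: "integrable lborel upper"
    unfolding upper_def[abs_def] using E_int NE_int by simp
  have lower_int: "integrable lborel lower"
    unfolding lower_def[abs_def] using ball_int NE_int by simp
  have H_int: "integrable lborel H"
  proof (rule Bochner_Integration.integrable_bound[OF upper_int])
    show "H \<in> borel_measurable lborel"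
      unfolding H_def[abs_def] using G_meas lin_meas by measurable
    have low_up: "lower v \<ge> - upper v" for v
    proof -
      have "0 \<le> x * exp (- C) * indicator (cball 0 1) v" "0 \<le> x * E v"
        using x by (simp_all add: E_def)
      then show ?thesis
        by (simp add: lower_def upper_def)
    qed
    then have "\<bar>H v\<bar> \<le> \<bar>upper v\<bar>" for v
      using low_up[of v] H_lower[of v] H_upper[of v] by linarith
    then show "AE v in lborel. norm (H v) \<le> norm (upper v)"
      by simp
  qed
  show "x * exp (- C) * measure lborel (cball (0::'a) 1) - g * (\<integral>v. norm v * E v \<partial>lborel)
      \<le> (\<integral>v. (x + lin v) * exp (- G v) \<partial>lborel)"
    using integral_mono[OF lower_int H_int H_lower] ball_int NE_int
    by (simp add: lower_def H_def)
  show "(\<integral>v. (x + lin v) * exp (- G v) \<partial>lborel)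
      \<le> x * (\<integral>v. E v \<partial>lborel) + g * (\<integral>v. norm v * E v \<partial>lborel)"
    using integral_mono[OF H_int upper_int H_upper] E_int NE_int
    by (simp add: upper_def H_def)
qed

lemma integral_bounds_at_max:
  fixes \<alpha> :: "nat \<Rightarrow> real^'d" and \<gamma> \<xi> th :: "real^'d"
  assumes \<omega>_pos: "\<And>k. k < K \<Longrightarrow> \<omega> k > 0"
    and max: "\<And>\<theta>. fobj K \<alpha> \<omega> \<xi> \<theta> \<le> fobj K \<alpha> \<omega> \<xi> th"
    and \<alpha>_bound: "\<And>k. k < K \<Longrightarrow> norm (\<alpha> k) \<le> L" and L: "L \<ge> 0"
    and x: "\<gamma> \<bullet> th \<ge> 0"
  defines "s \<equiv> exp (fobj K \<alpha> \<omega> \<xi> th) / sqrt (det (Imat K \<alpha> \<omega> th))"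
    and "E \<equiv> \<lambda>v::real^'d. exp (- (exp (- L) / 2) * (norm v - 1))"
    and "J \<equiv> \<integral>\<theta>. (\<gamma> \<bullet> \<theta>) * exp (fobj K \<alpha> \<omega> \<xi> \<theta>) \<partial>lborel"
  shows "s * ((\<gamma> \<bullet> th) * exp (- (exp L / 2)) * measure lborel (cball (0::real^'d) 1)
            - norm \<gamma> * (\<integral>v. norm v * E v \<partial>lborel)) \<le> J"
    and "J \<le> s * ((\<gamma> \<bullet> th) * (\<integral>v. E v \<partial>lborel) + norm \<gamma> * (\<integral>v. norm v * E v \<partial>lborel))"
proof -
  define w where "w k = \<omega> k * exp (\<alpha> k \<bullet> th)" for k
  have w: "\<And>k. k < K \<Longrightarrow> w k \<ge> 0"
    using \<omega>_pos by (simp add: w_def less_imp_le)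
  define A where "A = mat 1 + (\<Sum>k<K. w k *\<^sub>R outer (\<alpha> k))"
  have A: "Imat K \<alpha> \<omega> th = A"
    by (simp add: Imat_eq_outer A_def w_def)
  obtain P :: "real^'d^'d" where P: "transpose P ** A ** P = mat 1"
    using congruence_to_identity[of K w \<alpha>] w unfolding A_def by blast
  then have det_A: "det A > 0" and det_P: "\<bar>det P\<bar> = 1 / sqrt (det A)"
    by (rule det_congruent_to_identity)+
  then have "det P \<noteq> 0"
    by auto
  note normalized = gap_normalized_bounds[where K=K and w=w and \<alpha>=\<alpha> and L=L and P=P,
      OF w \<alpha>_bound L P[unfolded A_def]]
  define G where "G v = gap K \<alpha> w (P *v v)" for v
  have G_lower: "exp (- L) / 2 * (norm v - 1) \<le> G v"
    and G_ball: "norm v \<le> 1 \<Longrightarrow> G v \<le> exp L / 2" for v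
    using normalized(2,3) by (simp_all add: G_def)
  have G_meas: "G \<in> borel_measurable borel"
    unfolding G_def[abs_def] gap_def exp_rem_def
    by (intro borel_measurable_continuous_onI continuous_intros) auto
  have lin_meas: "(\<lambda>v. \<gamma> \<bullet> (P *v v)) \<in> borel_measurable borel"
    by (intro borel_measurable_continuous_onI continuous_intros)
  have lin_bound: "\<bar>\<gamma> \<bullet> (P *v v)\<bar> \<le> norm \<gamma> * norm v" for v
    using Cauchy_Schwarz_ineq2[of \<gamma> "P *v v"] normalized(1)[of v]
    by (meson mult_left_mono norm_ge_zero order_trans)
  have J_eq: "J = s * (\<integral>v. (\<gamma> \<bullet> th + \<gamma> \<bullet> (P *v v)) * exp (- G v) \<partial>lborel)"
  proof -
    have "J = \<bar>det P\<bar> * (\<integral>v. (\<gamma> \<bullet> (th + P *v v)) * exp (fobj K \<alpha> \<omega> \<xi> (th + P *v v)) \<partial>lborel)"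
      unfolding J_def
      by (rule lborel_integral_linear_affine[of "(*v) P", simplified])
        (use \<open>det P \<noteq> 0\<close> in
          \<open>auto simp: fobj_def intro!: borel_measurable_continuous_onI continuous_intros\<close>)
    also have "\<dots> = \<bar>det P\<bar> * exp (fobj K \<alpha> \<omega> \<xi> th)
        * (\<integral>v. (\<gamma> \<bullet> th + \<gamma> \<bullet> (P *v v)) * exp (- G v) \<partial>lborel)"
      by (simp add: fobj_shift_at_max[OF max] G_def w_def[abs_def] inner_add_right exp_diff
          exp_minus field_simps flip: integral_mult_right_zero)
    finally show ?thesis
      by (simp add: s_def det_P A)
  qed
  have "s \<ge> 0"
    using det_A A by (simp add: s_def)
  have c: "exp (- L) / 2 > 0"
    by simp
  note bounds = integral_bounds_from_growth[OF G_meas lin_meas c x lin_bound G_lower G_ball]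
  show "s * ((\<gamma> \<bullet> th) * exp (- (exp L / 2)) * measure lborel (cball (0::real^'d) 1)
      - norm \<gamma> * (\<integral>v. norm v * E v \<partial>lborel)) \<le> J"
    unfolding J_eq E_def using mult_left_mono[OF bounds(1) \<open>s \<ge> 0\<close>] by simp
  show "J \<le> s * ((\<gamma> \<bullet> th) * (\<integral>v. E v \<partial>lborel) + norm \<gamma> * (\<integral>v. norm v * E v \<partial>lborel))"
    unfolding J_eq E_def using mult_left_mono[OF bounds(2) \<open>s \<ge> 0\<close>] by simp
qed

lemma eventually_proportional_bounds:
  fixes x s J :: "'a \<Rightarrow> real"
  assumes x: "filterlim x at_top F" and a: "a > 0" and s: "\<forall>\<^sub>F n in F. s n \<ge> 0"
    and lower: "\<forall>\<^sub>F n in F. s n * (a * x n - b) \<le> J n"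
    and upper: "\<forall>\<^sub>F n in F. J n \<le> s n * (c * x n + b)"
  shows "\<exists>M>0. \<forall>\<^sub>F n in F. inverse M * (x n * s n) \<le> J n \<and> J n \<le> M * (x n * s n)"
proof (intro exI conjI)
  define M where "M = max (2 / a) (\<bar>c\<bar> + \<bar>b\<bar>)"
  show M: "M > 0"
    using a by (simp add: M_def less_max_iff_disj)
  have "\<forall>\<^sub>F n in F. max 1 (2 * \<bar>b\<bar> / a) \<le> x n"
    using x unfolding filterlim_at_top by blast
  with s lower upper show "\<forall>\<^sub>F n in F. inverse M * (x n * s n) \<le> J n \<and> J n \<le> M * (x n * s n)"
  proof eventually_elim
    case (elim n)
    then have x1: "x n \<ge> 1" and xb: "2 * \<bar>b\<bar> \<le> a * x n"
      using a by (auto simp: field_simps)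
    have "inverse M \<le> inverse (2 / a)"
      using a by (intro le_imp_inverse_le) (auto simp: M_def)
    then have "inverse M \<le> a / 2"
      by simp
    then have "inverse M * (x n * s n) \<le> a / 2 * (x n * s n)"
      using x1 elim(1) by (intro mult_right_mono) auto
    also have "\<dots> = s n * (a * x n / 2)"
      by (simp add: field_simps)
    also have "\<dots> \<le> s n * (a * x n - b)"
      using xb elim(1) by (intro mult_left_mono) auto
    finally have "inverse M * (x n * s n) \<le> J n"
      using elim(2) by linarith
    moreover have "s n * (c * x n + b) \<le> M * (x n * s n)"
    proof -
      have "c * x n \<le> \<bar>c\<bar> * x n" "\<bar>b\<bar> * 1 \<le> \<bar>b\<bar> * x n"
        using x1 by (intro mult_right_mono mult_left_mono; simp)+
      then have "c * x n + b \<le> (\<bar>c\<bar> + \<bar>b\<bar>) * x n"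
        unfolding distrib_right by linarith
      also have "\<dots> \<le> M * x n"
        using x1 by (intro mult_right_mono) (auto simp: M_def)
      finally have "s n * (c * x n + b) \<le> s n * (M * x n)"
        using elim(1) by (intro mult_left_mono)
      then show ?thesis
        by (simp add: mult_ac)
    qed
    ultimately show ?case
      using elim(3) by linarith
  qed
qed

lemma laplace_integral_comparable_at_top:
  fixes \<alpha> :: "nat \<Rightarrow> real^'d" and \<gamma> :: "real^'d" and \<xi> \<theta>hat :: "nat \<Rightarrow> real^'d"
  assumes \<omega>_pos: "\<And>k. k < K \<Longrightarrow> \<omega> k > 0"
    and max: "\<And>n \<theta>. fobj K \<alpha> \<omega> (\<xi> n) \<theta> \<le> fobj K \<alpha> \<omega> (\<xi> n) (\<theta>hat n)"
    and lim: "filterlim (\<lambda>n. \<gamma> \<bullet> \<theta>hat n) at_top sequentially"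
  shows "\<exists>M>0. \<forall>\<^sub>F n in sequentially.
         let R = (\<gamma> \<bullet> \<theta>hat n) * exp (fobj K \<alpha> \<omega> (\<xi> n) (\<theta>hat n))
                   / sqrt (det (Imat K \<alpha> \<omega> (\<theta>hat n)));
             J = integral\<^sup>L lborel (\<lambda>\<theta>. (2 * pi) powr (- real CARD('d) / 2)
                   * (\<gamma> \<bullet> \<theta>) * exp (fobj K \<alpha> \<omega> (\<xi> n) \<theta>))
         in inverse M * R \<le> J \<and> J \<le> M * R"
proof -
  define L where "L = (\<Sum>k<K. norm (\<alpha> k))"
  have L: "L \<ge> 0" "\<And>k. k < K \<Longrightarrow> norm (\<alpha> k) \<le> L"
    unfolding L_def by (auto intro: sum_nonneg member_le_sum)
  define cd where "cd = (2 * pi) powr (- real CARD('d) / 2)"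
  define E where "E = (\<lambda>v::real^'d. exp (- (exp (- L) / 2) * (norm v - 1)))"
  define s where "s n = exp (fobj K \<alpha> \<omega> (\<xi> n) (\<theta>hat n)) / sqrt (det (Imat K \<alpha> \<omega> (\<theta>hat n)))" for n
  define J where "J n = (\<integral>\<theta>. cd * (\<gamma> \<bullet> \<theta>) * exp (fobj K \<alpha> \<omega> (\<xi> n) \<theta>) \<partial>lborel)" for n
  define a where "a = cd * exp (- (exp L / 2)) * measure lborel (cball (0::real^'d) 1)"
  define b where "b = cd * norm \<gamma> * (\<integral>v. norm v * E v \<partial>lborel)"
  define c where "c = cd * (\<integral>v. E v \<partial>lborel)"
  have cd: "cd > 0"
    by (simp add: cd_def)
  have "a > 0"
    using cd by (simp add: a_def content_cball_gt_0_iff[of "0::real^'d" 1, simplified])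
  have J_eq: "J n = cd * (\<integral>\<theta>. (\<gamma> \<bullet> \<theta>) * exp (fobj K \<alpha> \<omega> (\<xi> n) \<theta>) \<partial>lborel)" for n
    by (simp add: J_def mult.assoc)
  have x_nonneg: "\<forall>\<^sub>F n in sequentially. \<gamma> \<bullet> \<theta>hat n \<ge> 0"
    using lim by (simp add: filterlim_at_top)
  have "\<exists>M>0. \<forall>\<^sub>F n in sequentially.
      inverse M * ((\<gamma> \<bullet> \<theta>hat n) * s n) \<le> J n \<and> J n \<le> M * ((\<gamma> \<bullet> \<theta>hat n) * s n)"
  proof (rule eventually_proportional_bounds[OF lim \<open>a > 0\<close>])
    have "s n > 0" for n
      using det_Imat_pos[of K \<omega> \<alpha> "\<theta>hat n", OF \<omega>_pos] by (simp add: s_def)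
    then show "\<forall>\<^sub>F n in sequentially. s n \<ge> 0"
      by (simp add: less_imp_le)
    show "\<forall>\<^sub>F n in sequentially. s n * (a * (\<gamma> \<bullet> \<theta>hat n) - b) \<le> J n"
      using x_nonneg
    proof eventually_elim
      case (elim n)
      note bound = integral_bounds_at_max(1)[OF \<omega>_pos max[of n] L(2) L(1) elim]
      show ?case
        using mult_left_mono[OF bound less_imp_le[OF cd]] unfolding s_def
        by (simp add: J_eq a_def b_def E_def algebra_simps)
    qed
    show "\<forall>\<^sub>F n in sequentially. J n \<le> s n * (c * (\<gamma> \<bullet> \<theta>hat n) + b)"
      using x_nonneg
    proof eventually_elim
      case (elim n)
      note bound = integral_bounds_at_max(2)[OF \<omega>_pos max[of n] L(2) L(1) elim]
      show ?case
        using mult_left_mono[OF bound less_imp_le[OF cd]] unfolding s_def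
        by (simp add: J_eq c_def b_def E_def algebra_simps)
    qed
  qed
  then show ?thesis
    by (simp add: Let_def s_def J_def cd_def mult.assoc)
qed

theorem proposition10:
  fixes K :: nat and \<alpha> :: "nat \<Rightarrow> real^'d" and \<omega> :: "nat \<Rightarrow> real"
    and \<gamma> :: "real^'d" and \<xi> :: "nat \<Rightarrow> real^'d" and \<theta>hat :: "nat \<Rightarrow> real^'d"
  assumes K: "K \<ge> 1"
    and \<omega>pos: "\<And>k. k < K \<Longrightarrow> \<omega> k > 0"
    and max: "\<And>n \<theta>. fobj K \<alpha> \<omega> (\<xi> n) \<theta> \<le> fobj K \<alpha> \<omega> (\<xi> n) (\<theta>hat n)"
  shows
   "(filterlim (\<lambda>n. \<gamma> \<bullet> \<theta>hat n) at_top sequentially \<longrightarrow>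
      (\<exists>M>0. \<forall>\<^sub>F n in sequentially.
         let R = (\<gamma> \<bullet> \<theta>hat n) * exp (fobj K \<alpha> \<omega> (\<xi> n) (\<theta>hat n))
                   / sqrt (det (Imat K \<alpha> \<omega> (\<theta>hat n)));
             J = integral\<^sup>L lborel (\<lambda>\<theta>. (2 * pi) powr (- real CARD('d) / 2)
                   * (\<gamma> \<bullet> \<theta>) * exp (fobj K \<alpha> \<omega> (\<xi> n) \<theta>))
         in inverse M * R \<le> J \<and> J \<le> M * R))
  \<and> (filterlim (\<lambda>n. \<gamma> \<bullet> \<theta>hat n) at_bot sequentially \<longrightarrow>
      (\<exists>M>0. \<forall>\<^sub>F n in sequentially.
         let R = ((- \<gamma>) \<bullet> \<theta>hat n) * exp (fobj K \<alpha> \<omega> (\<xi> n) (\<theta>hat n))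
                   / sqrt (det (Imat K \<alpha> \<omega> (\<theta>hat n)));
             J = integral\<^sup>L lborel (\<lambda>\<theta>. (2 * pi) powr (- real CARD('d) / 2)
                   * ((- \<gamma>) \<bullet> \<theta>) * exp (fobj K \<alpha> \<omega> (\<xi> n) \<theta>))
         in inverse M * R \<le> J \<and> J \<le> M * R))"
proof -
  have "filterlim (\<lambda>n. \<gamma> \<bullet> \<theta>hat n) at_bot sequentially
      \<longleftrightarrow> filterlim (\<lambda>n. (- \<gamma>) \<bullet> \<theta>hat n) at_top sequentially"
    by (simp add: filterlim_uminus_at_top)
  then show ?thesis
    using laplace_integral_comparable_at_top[where \<xi>=\<xi> and \<theta>hat=\<theta>hat and \<gamma>=\<gamma>, OF \<omega>pos max]
      laplace_integral_comparable_at_top[where \<xi>=\<xi> and \<theta>hat=\<theta>hat and \<gamma>="- \<gamma>", OF \<omega>pos max]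
    by blast
qed

end
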